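(* For the relativistic quantities $I_1$, $I_0$, $J_0$ defined in the context, let $\{I_i \leq 0\}$, $\{I_i \equiv 0\}$, $\{I_i \geq 0\}$ (and likewise $\{J_0 \leq 0\}$, etc.) denote the sets of all equations of state $\rho(p)$ such that, for all $p \leq p_{max}$, the respective quantity is $\leq 0$, $\equiv 0$, or $\geq 0$. Then \begin{align*} \{I_1 \leq 0\} &\subset \{I_0 \leq 0\} \subset \{J_0 \leq 0\} \\ \{I_1 \equiv 0\} &\equiv \{I_0 \equiv 0\}\equiv \{J_0 \equiv 0\}\\ \{I_1 \geq 0\} &\subset \{I_0 \geq 0\} \subset \{J_0 \geq 0\} \:. \end{align*}
   Context: General Relativity (units with $c=1$), static perfect fluids. Consider a barotropic equation of state $\rho(p)$ given on an interval $[0,p_{max}]$, piecewise ${\mathcal C}^0$ on $[0,p_{max}]$, with $\rho$ positive. Define $\Gamma(p) := \int_0^p dp^\prime\,(\rho(p^\prime)+ p^\prime)^{-1}$, and assume that $\Gamma(p)$ exists and that the limit $\lim_{p\rightarrow 0} \rho^{-1} p$ exists. Define \begin{align*} H_0(p) &:= \rho(p) + \rho(p) e^{-\Gamma(p)} + 6 p e^{-\Gamma(p)},\\ J_0(p) &:= \frac{1}{2 \rho}\, [1-e^{-\Gamma}] \,H_0(p) - 3 \rho^{-1} \int_0^p dp^\prime e^{-\Gamma(p^\prime)} \frac{1}{\rho(p^\prime)+p^\prime} H_0(p^\prime),\\ I_0(p) &:= 1 - e^{-\Gamma(p)} - 6 e^{-\Gamma(p)} \rho^{-1} p,\\ I_1(p)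 &:= 6 e^{-\Gamma} p \,\rho^{-2}\, \frac{d\rho}{dp} - 5 e^{-\Gamma} (\rho+p)^{-1}, \end{align*} where for $I_1$ the equation of state is required to be ${\mathcal C}^0[0,p_{max}]$ and piecewise ${\mathcal C}^1$. *)

theory Defs
  imports "HOL-Analysis.Analysis"
begin

definition Gam :: "(real \<Rightarrow> real) \<Rightarrow> real \<Rightarrow> real" where
  "Gam \<rho> p = integral {0..p} (\<lambda>q. 1 / (\<rho> q + q))"

definition H0 :: "(real \<Rightarrow> real) \<Rightarrow> real \<Rightarrow> real" where
  "H0 \<rho> p = \<rho> p + \<rho> p * exp (- Gam \<rho> p) + 6 * p * exp (- Gam \<rho> p)"

definition J0 :: "(real \<Rightarrow> real) \<Rightarrow> real \<Rightarrow> real" where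
  "J0 \<rho> p = 1 / (2 * \<rho> p) * (1 - exp (- Gam \<rho> p)) * H0 \<rho> p
     - 3 / \<rho> p * integral {0..p} (\<lambda>q. exp (- Gam \<rho> q) * (1 / (\<rho> q + q)) * H0 \<rho> q)"

definition I0 :: "(real \<Rightarrow> real) \<Rightarrow> real \<Rightarrow> real" where
  "I0 \<rho> p = 1 - exp (- Gam \<rho> p) - 6 * exp (- Gam \<rho> p) * p / \<rho> p"

definition I1 :: "(real \<Rightarrow> real) \<Rightarrow> real \<Rightarrow> real" where
  "I1 \<rho> p = 6 * exp (- Gam \<rho> p) * p / (\<rho> p)^2 * deriv \<rho> p
     - 5 * exp (- Gam \<rho> p) / (\<rho> p + p)"

definition piecewise_C0 :: "real \<Rightarrow> (real \<Rightarrow> real) \<Rightarrow> bool" where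
  "piecewise_C0 pmax \<rho> \<longleftrightarrow> (\<exists>S. finite S \<and> continuous_on ({0..pmax} - S) \<rho> \<and>
     (\<forall>x\<in>S. (0 < x \<longrightarrow> (\<exists>l. (\<rho> \<longlongrightarrow> l) (at_left x))) \<and>
             (x < pmax \<longrightarrow> (\<exists>l. (\<rho> \<longlongrightarrow> l) (at_right x)))))"

definition eos :: "real \<Rightarrow> (real \<Rightarrow> real) \<Rightarrow> bool" where
  "eos pmax \<rho> \<longleftrightarrow> 0 < pmax \<and> (\<forall>p\<in>{0..pmax}. 0 < \<rho> p) \<and> piecewise_C0 pmax \<rho> \<and>
     (\<lambda>q. 1 / (\<rho> q + q)) integrable_on {0..pmax} \<and>
     (\<exists>L. ((\<lambda>p. p / \<rho> p) \<longlongrightarrow> L) (at_right 0))"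

definition eos1 :: "real \<Rightarrow> (real \<Rightarrow> real) \<Rightarrow> bool" where
  "eos1 pmax \<rho> \<longleftrightarrow> eos pmax \<rho> \<and> \<rho> piecewise_C1_differentiable_on {0..pmax}"

definition set_I1 :: "real \<Rightarrow> (real \<Rightarrow> bool) \<Rightarrow> (real \<Rightarrow> real) set" where
  "set_I1 pmax P = {\<rho>. eos1 pmax \<rho> \<and> (\<forall>p\<in>{0<..<pmax}. \<rho> differentiable (at p) \<longrightarrow> P (I1 \<rho> p))}"

definition set_I0 :: "real \<Rightarrow> (real \<Rightarrow> bool) \<Rightarrow> (real \<Rightarrow> real) set" where
  "set_I0 pmax P = {\<rho>. eos pmax \<rho> \<and> (\<forall>p\<in>{0<..pmax}. P (I0 \<rho> p))}"

definition set_J0 :: "real \<Rightarrow> (real \<Rightarrow> bool) \<Rightarrow> (real \<Rightarrow> real) set" where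
  "set_J0 pmax P = {\<rho>. eos pmax \<rho> \<and> (\<forall>p\<in>{0<..pmax}. P (J0 \<rho> p))}"

end

theory Submission
  imports Defs
begin

text \<open>
  Write \<open>e = exp (- \<Gamma>)\<close>, so that \<open>e' = - e / (\<rho> + p)\<close>. Since \<open>I\<^sub>0(0) = 0\<close> and
  \<open>I\<^sub>0' = I\<^sub>1\<close> wherever \<open>\<rho>\<close> is differentiable, a sign of \<open>I\<^sub>1\<close> is inherited by \<open>I\<^sub>0\<close>.

  The integrand of \<open>J\<^sub>0\<close> has the explicit primitive \<open>7/2 \<integral>\<^sub>0\<^sup>p e\<^sup>2 + p e - 5/2 p e\<^sup>2\<close>,
  which gives \<open>2 \<rho> J\<^sub>0 = (1 + e) \<rho> I\<^sub>0 + M\<close> with \<open>M = 6 p e + 15 p e\<^sup>2 - 21 \<integral>\<^sub>0\<^sup>p e\<^sup>2\<close>.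
  Now \<open>M(0) = 0\<close> and \<open>M' = 6 e \<rho> I\<^sub>0 / (\<rho> + p)\<close>, so a sign of \<open>I\<^sub>0\<close> passes to \<open>M\<close> and
  then to \<open>J\<^sub>0\<close>. Conversely, if \<open>J\<^sub>0 \<equiv> 0\<close> then \<open>M\<close> solves the linear equation
  \<open>M' = - 6 e M / ((1 + e) (\<rho> + p))\<close> with \<open>M(0) = 0\<close>, hence \<open>M \<equiv> 0\<close> and \<open>I\<^sub>0 \<equiv> 0\<close>;
  and \<open>I\<^sub>0 \<equiv> 0\<close> gives \<open>I\<^sub>1 = I\<^sub>0' \<equiv> 0\<close>. The monotonicity arguments only need derivatives
  off the finitely many points where \<open>\<rho>\<close> fails to be continuous (resp. differentiable).
\<close>

lemma DERIV_nonpos_off_finite_imp_nonincreasing: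
  fixes f f' :: "real \<Rightarrow> real"
  assumes "a \<le> b" "continuous_on {a..b} f" "finite S"
    and "\<And>x. x \<in> {a<..<b} - S \<Longrightarrow> (f has_real_derivative f' x) (at x)"
    and "\<And>x. x \<in> {a<..<b} - S \<Longrightarrow> f' x \<le> 0"
  shows "f b \<le> f a"
proof -
  let ?g = "\<lambda>x. if x \<in> {a<..<b} - S then f' x else 0"
  have "(?g has_integral (f b - f a)) {a..b}"
    using assms(1-4)
    by (intro fundamental_theorem_of_calculus_interior_strong)
       (auto simp: has_real_derivative_iff_has_vector_derivative[symmetric])
  then have "0 \<le> - (f b - f a)"
    by (rule has_integral_nonneg[OF has_integral_neg]) (simp add: assms(5))
  then show ?thesis by simp
qed

lemma DERIV_neg_mult_off_finite_imp_zero: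
  fixes f c :: "real \<Rightarrow> real"
  assumes "a \<le> b" "continuous_on {a..b} f" "f a = 0" "finite S"
    and "\<And>x. x \<in> {a<..<b} - S \<Longrightarrow> (f has_real_derivative - c x * f x) (at x)"
    and "\<And>x. x \<in> {a<..<b} - S \<Longrightarrow> 0 \<le> c x"
  shows "f b = 0"
proof -
  have "f b * f b \<le> f a * f a"
  proof (rule DERIV_nonpos_off_finite_imp_nonincreasing
      [where f' = "\<lambda>x. - 2 * c x * (f x * f x)", OF assms(1) _ assms(4)])
    show "continuous_on {a..b} (\<lambda>x. f x * f x)"
      using assms(2) by (intro continuous_intros)
    fix x assume x: "x \<in> {a<..<b} - S"
    show "((\<lambda>x. f x * f x) has_real_derivative - 2 * c x * (f x * f x)) (at x)"
      using DERIV_mult[OF assms(5)[OF x] assms(5)[OF x]] by (simp add: algebra_simps)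
    show "- 2 * c x * (f x * f x) \<le> 0"
      using assms(6)[OF x] by simp
  qed
  then show ?thesis using assms(3) by (auto simp: mult_le_0_iff)
qed

lemma integral_has_real_derivative_isCont:
  fixes f :: "real \<Rightarrow> real"
  assumes "f integrable_on {a..b}" "a < x" "x < b" "isCont f x"
  shows "((\<lambda>u. integral {a..u} f) has_real_derivative f x) (at x)"
proof -
  have "at x within ({a..b} - {}) = at x"
    using assms(2,3) by (intro at_within_interior) auto
  then show ?thesis
    using integral_has_vector_derivative_continuous_at[OF assms(1), of x "{}"] assms
    by (simp add: has_real_derivative_iff_has_vector_derivative continuous_at_imp_continuous_at_within)
qed

lemma piecewise_C0_isCont_off_finite:
  assumes "piecewise_C0 pmax \<rho>"
  obtains S where "finite S" "\<And>p. p \<in> {0<..<pmax} - S \<Longrightarrow> isCont \<rho> p"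
proof -
  obtain S where S: "finite S" "continuous_on ({0..pmax} - S) \<rho>"
    using assms unfolding piecewise_C0_def by blast
  have "open ({0<..<pmax} - S)"
    using S(1) by (intro open_Diff finite_imp_closed) auto
  moreover have "continuous_on ({0<..<pmax} - S) \<rho>"
    using S(2) by (rule continuous_on_subset) auto
  ultimately show ?thesis
    using that S(1) continuous_on_eq_continuous_at by blast
qed

definition eGam :: "(real \<Rightarrow> real) \<Rightarrow> real \<Rightarrow> real" where
  "eGam \<rho> p = exp (- Gam \<rho> p)"

definition eGam_sq_integral :: "(real \<Rightarrow> real) \<Rightarrow> real \<Rightarrow> real" where
  "eGam_sq_integral \<rho> p = integral {0..p} (\<lambda>q. (eGam \<rho> q)\<^sup>2)"

definition J0_primitive :: "(real \<Rightarrow> real) \<Rightarrow> real \<Rightarrow> real" where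
  "J0_primitive \<rho> p = 7/2 * eGam_sq_integral \<rho> p + p * eGam \<rho> p - 5/2 * p * (eGam \<rho> p)\<^sup>2"

definition J0_remainder :: "(real \<Rightarrow> real) \<Rightarrow> real \<Rightarrow> real" where
  "J0_remainder \<rho> p = 6 * p * eGam \<rho> p + 15 * p * (eGam \<rho> p)\<^sup>2 - 21 * eGam_sq_integral \<rho> p"

lemma Gam_0 [simp]: "Gam \<rho> 0 = 0"
  by (simp add: Gam_def)

lemma eGam_pos: "0 < eGam \<rho> p"
  by (simp add: eGam_def)

lemma I0_0 [simp]: "I0 \<rho> 0 = 0"
  by (simp add: I0_def)

lemma J0_primitive_0 [simp]: "J0_primitive \<rho> 0 = 0"
  by (simp add: J0_primitive_def eGam_sq_integral_def)

lemma J0_remainder_0 [simp]: "J0_remainder \<rho> 0 = 0"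
  by (simp add: J0_remainder_def eGam_sq_integral_def)

context
  fixes pmax :: real and \<rho> :: "real \<Rightarrow> real"
  assumes eos: "eos pmax \<rho>"
begin

lemma eos_rho_pos: "p \<in> {0..pmax} \<Longrightarrow> 0 < \<rho> p"
  using eos by (simp add: eos_def)

lemma eos_isCont_off_finite:
  obtains S where "finite S" "\<And>q. q \<in> {0<..<pmax} - S \<Longrightarrow> isCont \<rho> q"
  using eos piecewise_C0_isCont_off_finite unfolding eos_def by blast

lemma continuous_on_Gam: "continuous_on {0..pmax} (Gam \<rho>)"
  using eos indefinite_integral_continuous_1 unfolding eos_def Gam_def[abs_def] by blast

lemma has_real_derivative_Gam:
  assumes "0 < p" "p < pmax" "isCont \<rho> p"
  shows "(Gam \<rho> has_real_derivative 1 / (\<rho> p + p)) (at p)"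
proof -
  have "isCont (\<lambda>q. 1 / (\<rho> q + q)) p"
    using assms eos_rho_pos[of p] by (auto intro!: continuous_intros)
  then show ?thesis
    using eos assms unfolding eos_def Gam_def[abs_def]
    by (intro integral_has_real_derivative_isCont) auto
qed

lemma continuous_on_eGam: "continuous_on {0..pmax} (eGam \<rho>)"
  unfolding eGam_def[abs_def] using continuous_on_Gam by (intro continuous_intros)

lemma has_real_derivative_eGam:
  assumes "0 < p" "p < pmax" "isCont \<rho> p"
  shows "(eGam \<rho> has_real_derivative - eGam \<rho> p / (\<rho> p + p)) (at p)"
  unfolding eGam_def[abs_def]
  by (rule derivative_eq_intros has_real_derivative_Gam[OF assms] refl)+ simp

lemma continuous_on_eGam_sq_integral: "continuous_on {0..pmax} (eGam_sq_integral \<rho>)"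
  unfolding eGam_sq_integral_def[abs_def] using continuous_on_eGam
  by (intro indefinite_integral_continuous_1 integrable_continuous_real continuous_intros)

lemma has_real_derivative_eGam_sq_integral:
  assumes "0 < p" "p < pmax"
  shows "(eGam_sq_integral \<rho> has_real_derivative (eGam \<rho> p)\<^sup>2) (at p)"
proof -
  have "continuous_on {0..pmax} (\<lambda>q. (eGam \<rho> q)\<^sup>2)"
    using continuous_on_eGam by (intro continuous_intros)
  then show ?thesis
    unfolding eGam_sq_integral_def[abs_def] using assms
    by (intro integral_has_real_derivative_isCont integrable_continuous_real)
       (auto simp: continuous_on_interior)
qed

lemma continuous_on_J0_primitive: "continuous_on {0..pmax} (J0_primitive \<rho>)"
  unfolding J0_primitive_def[abs_def]
  using continuous_on_eGam continuous_on_eGam_sq_integral by (intro continuous_intros)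

lemma continuous_on_J0_remainder: "continuous_on {0..pmax} (J0_remainder \<rho>)"
  unfolding J0_remainder_def[abs_def]
  using continuous_on_eGam continuous_on_eGam_sq_integral by (intro continuous_intros)

lemma has_real_derivative_J0_primitive:
  assumes "0 < p" "p < pmax" "isCont \<rho> p"
  shows "(J0_primitive \<rho> has_real_derivative exp (- Gam \<rho> p) * (1 / (\<rho> p + p)) * H0 \<rho> p) (at p)"
proof -
  have "\<rho> p + p \<noteq> 0"
    using assms eos_rho_pos[of p] by simp
  show ?thesis
    unfolding J0_primitive_def[abs_def]
    by (rule derivative_eq_intros has_real_derivative_eGam[OF assms]
          has_real_derivative_eGam_sq_integral[OF assms(1,2)] refl)+
       (use \<open>\<rho> p + p \<noteq> 0\<close> in
         \<open>simp add: H0_def eGam_def[symmetric] divide_simps,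
          simp add: algebra_simps power2_eq_square\<close>)
qed

lemma has_real_derivative_J0_remainder:
  assumes "0 < p" "p < pmax" "isCont \<rho> p"
  shows "(J0_remainder \<rho> has_real_derivative 6 * eGam \<rho> p * \<rho> p / (\<rho> p + p) * I0 \<rho> p) (at p)"
proof -
  have "\<rho> p \<noteq> 0" "\<rho> p + p \<noteq> 0"
    using assms eos_rho_pos[of p] by simp_all
  show ?thesis
    unfolding J0_remainder_def[abs_def]
    by (rule derivative_eq_intros has_real_derivative_eGam[OF assms]
          has_real_derivative_eGam_sq_integral[OF assms(1,2)] refl)+
       (use \<open>\<rho> p \<noteq> 0\<close> \<open>\<rho> p + p \<noteq> 0\<close> in
         \<open>simp add: I0_def eGam_def[symmetric] divide_simps,
          simp add: algebra_simps power2_eq_square\<close>)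
qed

lemma integral_J0_integrand:
  assumes "0 \<le> p" "p \<le> pmax"
  shows "integral {0..p} (\<lambda>q. exp (- Gam \<rho> q) * (1 / (\<rho> q + q)) * H0 \<rho> q) = J0_primitive \<rho> p"
proof -
  obtain S where "finite S" and S: "\<And>q. q \<in> {0<..<pmax} - S \<Longrightarrow> isCont \<rho> q"
    using eos_isCont_off_finite by blast
  then have "((\<lambda>q. exp (- Gam \<rho> q) * (1 / (\<rho> q + q)) * H0 \<rho> q)
      has_integral (J0_primitive \<rho> p - J0_primitive \<rho> 0)) {0..p}"
    using assms has_real_derivative_J0_primitive S
    by (intro fundamental_theorem_of_calculus_interior_strong
          continuous_on_subset[OF continuous_on_J0_primitive])
       (auto simp: has_real_derivative_iff_has_vector_derivative[symmetric])
  then show ?thesis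
    by (simp add: integral_unique)
qed

lemma J0_decomposition:
  assumes "0 \<le> p" "p \<le> pmax"
  shows "2 * \<rho> p * J0 \<rho> p = (1 + eGam \<rho> p) * \<rho> p * I0 \<rho> p + J0_remainder \<rho> p"
  using eos_rho_pos[of p] assms
  unfolding J0_def integral_J0_integrand[OF assms]
  by (simp add: I0_def H0_def J0_primitive_def J0_remainder_def
        eGam_def[symmetric] field_simps power2_eq_square)

lemma J0_sign_if_I0_sign:
  assumes I0_sign: "\<forall>q\<in>{0<..pmax}. s * I0 \<rho> q \<le> 0" and p: "0 < p" "p \<le> pmax"
  shows "s * J0 \<rho> p \<le> 0"
proof -
  obtain S where "finite S" and S: "\<And>q. q \<in> {0<..<pmax} - S \<Longrightarrow> isCont \<rho> q"
    using eos_isCont_off_finite by blast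
  let ?c = "\<lambda>x. 6 * eGam \<rho> x * \<rho> x / (\<rho> x + x)"
  have "s * J0_remainder \<rho> p \<le> s * J0_remainder \<rho> 0"
  proof (rule DERIV_nonpos_off_finite_imp_nonincreasing
      [where a = 0 and b = p and f = "\<lambda>x. s * J0_remainder \<rho> x"
        and f' = "\<lambda>x. ?c x * (s * I0 \<rho> x)", OF _ _ \<open>finite S\<close>])
    show "continuous_on {0..p} (\<lambda>x. s * J0_remainder \<rho> x)"
      using p by (intro continuous_intros continuous_on_subset[OF continuous_on_J0_remainder]) auto
    fix x assume x: "x \<in> {0<..<p} - S"
    then have "(J0_remainder \<rho> has_real_derivative ?c x * I0 \<rho> x) (at x)"
      using p S by (intro has_real_derivative_J0_remainder) auto
    then show "((\<lambda>x. s * J0_remainder \<rho> x) has_real_derivative ?c x * (s * I0 \<rho> x)) (at x)"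
      by (rule DERIV_cong[OF DERIV_cmult]) simp
    show "?c x * (s * I0 \<rho> x) \<le> 0"
      using x p I0_sign eos_rho_pos[of x] eGam_pos[of \<rho> x]
      by (intro mult_nonneg_nonpos[of _ "s * I0 \<rho> x"]) auto
  qed (use p in simp)
  then have "s * J0_remainder \<rho> p \<le> 0"
    by simp
  moreover have "(1 + eGam \<rho> p) * \<rho> p * (s * I0 \<rho> p) \<le> 0"
    using p I0_sign eos_rho_pos[of p] eGam_pos[of \<rho> p]
    by (intro mult_nonneg_nonpos[of _ "s * I0 \<rho> p"]) auto
  moreover have "s * (2 * \<rho> p * J0 \<rho> p)
      = s * ((1 + eGam \<rho> p) * \<rho> p * I0 \<rho> p + J0_remainder \<rho> p)"
    using J0_decomposition[of p] p by simp
  ultimately have "\<rho> p * (s * J0 \<rho> p) \<le> 0"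
    by (simp add: algebra_simps)
  then show ?thesis
    using eos_rho_pos[of p] p by (simp add: mult_le_0_iff)
qed

lemma I0_zero_if_J0_zero:
  assumes J0_zero: "\<forall>q\<in>{0<..pmax}. J0 \<rho> q = 0" and p: "0 < p" "p \<le> pmax"
  shows "I0 \<rho> p = 0"
proof -
  obtain S where "finite S" and S: "\<And>q. q \<in> {0<..<pmax} - S \<Longrightarrow> isCont \<rho> q"
    using eos_isCont_off_finite by blast
  have rho_I0: "\<rho> x * I0 \<rho> x = - J0_remainder \<rho> x / (1 + eGam \<rho> x)" if "0 < x" "x \<le> pmax" for x
    using J0_decomposition[of x] J0_zero that eGam_pos[of \<rho> x] by (simp add: field_simps)
  have "J0_remainder \<rho> p = 0"
  proof (rule DERIV_neg_mult_off_finite_imp_zero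
      [where a = 0 and b = p and f = "J0_remainder \<rho>"
        and c = "\<lambda>x. 6 * eGam \<rho> x / ((1 + eGam \<rho> x) * (\<rho> x + x))", OF _ _ _ \<open>finite S\<close>])
    show "continuous_on {0..p} (J0_remainder \<rho>)"
      using p by (intro continuous_on_subset[OF continuous_on_J0_remainder]) auto
    fix x assume x: "x \<in> {0<..<p} - S"
    have "6 * eGam \<rho> x * \<rho> x / (\<rho> x + x) * I0 \<rho> x
        = 6 * eGam \<rho> x / (\<rho> x + x) * (\<rho> x * I0 \<rho> x)"
      by simp
    also have "\<dots> = - (6 * eGam \<rho> x / ((1 + eGam \<rho> x) * (\<rho> x + x))) * J0_remainder \<rho> x"
      using x p rho_I0[of x] by simp
    finally show "(J0_remainder \<rho> has_real_derivative
        - (6 * eGam \<rho> x / ((1 + eGam \<rho> x) * (\<rho> x + x))) * J0_remainder \<rho> x) (at x)"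
      using x p S by (intro DERIV_cong[OF has_real_derivative_J0_remainder]) auto
    show "0 \<le> 6 * eGam \<rho> x / ((1 + eGam \<rho> x) * (\<rho> x + x))"
      using x p eos_rho_pos[of x] eGam_pos[of \<rho> x] by simp
  qed (use p in simp_all)
  then show ?thesis
    using rho_I0[OF p] eos_rho_pos[of p] p by simp
qed

lemma has_real_derivative_I0:
  assumes "0 < x" "x < pmax" "\<rho> differentiable (at x)"
  shows "(I0 \<rho> has_real_derivative I1 \<rho> x) (at x)"
proof -
  have D: "(\<rho> has_real_derivative deriv \<rho> x) (at x)"
    using assms(3) DERIV_deriv_iff_real_differentiable by blast
  have "\<rho> x \<noteq> 0" "\<rho> x + x \<noteq> 0"
    using assms eos_rho_pos[of x] by simp_all
  have I0_eq: "I0 \<rho> = (\<lambda>x. 1 - eGam \<rho> x - 6 * eGam \<rho> x * x / \<rho> x)"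
    by (simp add: I0_def eGam_def fun_eq_iff)
  show ?thesis
    unfolding I0_eq
    by (rule derivative_eq_intros has_real_derivative_eGam[OF assms(1,2) DERIV_isCont[OF D]] D refl
          \<open>\<rho> x \<noteq> 0\<close>)+
       (use \<open>\<rho> x \<noteq> 0\<close> \<open>\<rho> x + x \<noteq> 0\<close> in
         \<open>simp add: I1_def eGam_def[symmetric] divide_simps,
          simp add: algebra_simps power2_eq_square\<close>)
qed

lemma I1_zero_if_I0_zero:
  assumes "\<forall>p\<in>{0<..pmax}. I0 \<rho> p = 0" "x \<in> {0<..<pmax}" "\<rho> differentiable (at x)"
  shows "I1 \<rho> x = 0"
proof -
  have "(I0 \<rho> has_real_derivative I1 \<rho> x) (at x)"
    using assms(2,3) by (intro has_real_derivative_I0) auto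
  then have "((\<lambda>_. 0) has_real_derivative I1 \<rho> x) (at x)"
    by (rule has_field_derivative_transform_within_open[where S = "{0<..<pmax}"]) (use assms in auto)
  then show ?thesis
    using DERIV_const DERIV_unique by blast
qed

end

context
  fixes pmax :: real and \<rho> :: "real \<Rightarrow> real"
  assumes eos1: "eos1 pmax \<rho>"
begin

lemma continuous_on_I0: "continuous_on {0..pmax} (I0 \<rho>)"
proof -
  have "eos pmax \<rho>" "continuous_on {0..pmax} \<rho>"
    using eos1 by (auto simp: eos1_def piecewise_C1_differentiable_on_def)
  then show ?thesis
    unfolding I0_def[abs_def] eGam_def[symmetric]
    using continuous_on_eGam eos_rho_pos by (intro continuous_intros) force+
qed

lemma I0_sign_if_I1_sign:
  assumes I1_sign: "\<forall>x\<in>{0<..<pmax}. \<rho> differentiable (at x) \<longrightarrow> s * I1 \<rho> x \<le> 0"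
    and p: "0 < p" "p \<le> pmax"
  shows "s * I0 \<rho> p \<le> 0"
proof -
  have eos: "eos pmax \<rho>"
    using eos1 by (simp add: eos1_def)
  obtain T where "finite T" and T: "\<And>x. x \<in> {0..pmax} - T \<Longrightarrow> \<rho> differentiable (at x)"
    using eos1 unfolding eos1_def piecewise_C1_differentiable_on_def C1_differentiable_on_eq by blast
  have "s * I0 \<rho> p \<le> s * I0 \<rho> 0"
  proof (rule DERIV_nonpos_off_finite_imp_nonincreasing
      [where a = 0 and b = p and f = "\<lambda>x. s * I0 \<rho> x" and f' = "\<lambda>x. s * I1 \<rho> x",
        OF _ _ \<open>finite T\<close>])
    show "continuous_on {0..p} (\<lambda>x. s * I0 \<rho> x)"
      using p by (intro continuous_intros continuous_on_subset[OF continuous_on_I0]) auto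
    fix x assume x: "x \<in> {0<..<p} - T"
    then show "((\<lambda>x. s * I0 \<rho> x) has_real_derivative s * I1 \<rho> x) (at x)"
      using p T by (intro DERIV_cmult has_real_derivative_I0[OF eos]) auto
    show "s * I1 \<rho> x \<le> 0"
      using x p T I1_sign by auto
  qed (use p in simp)
  then show ?thesis
    by simp
qed

end

lemma set_I1_subset_set_I0: "set_I1 pmax (\<lambda>x. s * x \<le> 0) \<subseteq> set_I0 pmax (\<lambda>x. s * x \<le> 0)"
  using I0_sign_if_I1_sign by (auto simp: set_I1_def set_I0_def eos1_def)

lemma set_I0_subset_set_J0: "set_I0 pmax (\<lambda>x. s * x \<le> 0) \<subseteq> set_J0 pmax (\<lambda>x. s * x \<le> 0)"
  using J0_sign_if_I0_sign by (auto simp: set_I0_def set_J0_def)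

lemma set_I1_zero_eq_set_I0_zero:
  "set_I1 pmax (\<lambda>x. x = 0) = set_I0 pmax (\<lambda>x. x = 0) \<inter> {\<rho>. eos1 pmax \<rho>}"
proof
  show "set_I1 pmax (\<lambda>x. x = 0) \<subseteq> set_I0 pmax (\<lambda>x. x = 0) \<inter> {\<rho>. eos1 pmax \<rho>}"
    using I0_sign_if_I1_sign[where s = 1] I0_sign_if_I1_sign[where s = "-1"]
    by (force simp: set_I1_def set_I0_def eos1_def)
  show "set_I0 pmax (\<lambda>x. x = 0) \<inter> {\<rho>. eos1 pmax \<rho>} \<subseteq> set_I1 pmax (\<lambda>x. x = 0)"
    using I1_zero_if_I0_zero by (auto simp: set_I1_def set_I0_def eos1_def)
qed

lemma set_I0_zero_eq_set_J0_zero: "set_I0 pmax (\<lambda>x. x = 0) = set_J0 pmax (\<lambda>x. x = 0)"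
proof
  show "set_I0 pmax (\<lambda>x. x = 0) \<subseteq> set_J0 pmax (\<lambda>x. x = 0)"
    using J0_sign_if_I0_sign[where s = 1] J0_sign_if_I0_sign[where s = "-1"]
    by (force simp: set_I0_def set_J0_def)
  show "set_J0 pmax (\<lambda>x. x = 0) \<subseteq> set_I0 pmax (\<lambda>x. x = 0)"
    using I0_zero_if_J0_zero by (auto simp: set_I0_def set_J0_def)
qed

theorem proposition4:
  fixes pmax :: real
  shows "set_I1 pmax (\<lambda>x. x \<le> 0) \<subseteq> set_I0 pmax (\<lambda>x. x \<le> 0)
       \<and> set_I0 pmax (\<lambda>x. x \<le> 0) \<subseteq> set_J0 pmax (\<lambda>x. x \<le> 0)
       \<and> set_I1 pmax (\<lambda>x. x = 0) = set_I0 pmax (\<lambda>x. x = 0) \<inter> {\<rho>. eos1 pmax \<rho>}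
       \<and> set_I0 pmax (\<lambda>x. x = 0) = set_J0 pmax (\<lambda>x. x = 0)
       \<and> set_I1 pmax (\<lambda>x. x \<ge> 0) \<subseteq> set_I0 pmax (\<lambda>x. x \<ge> 0)
       \<and> set_I0 pmax (\<lambda>x. x \<ge> 0) \<subseteq> set_J0 pmax (\<lambda>x. x \<ge> 0)"
  using set_I1_subset_set_I0[of pmax 1] set_I1_subset_set_I0[of pmax "-1"]
    set_I0_subset_set_J0[of pmax 1] set_I0_subset_set_J0[of pmax "-1"]
    set_I1_zero_eq_set_I0_zero set_I0_zero_eq_set_J0_zero
  by simp

end
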